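(* Let $d\ge1$ be an integer, $\gamma^2>0$, $\sigma^2\ge 0$, and let there be $I$ client types with data sizes $D_1,\dots,D_I>0$. Let $\mathcal{K}$ be a non-empty coalition of participants containing $K_i\ge 0$ participants of type $i$ for each $i\in\{1,\dots,I\}$, with $K=\sum_{i=1}^I K_i\ge 1$, and let $\varepsilon_{\mathcal{K}}$ denote its generalization error. Let $n\notin\mathcal{K}$ be a client with data size $D>0$ and let $\varepsilon_{\mathcal{K}\cup\{n\}}$ be the generalization error of the coalition $\mathcal{K}\cup\{n\}$. Define $$\eta=\frac{(2K+1)\sum_{i=1}^I K_i/D_i}{K^2}-\frac{(K+1)\sigma^2}{d\gamma^2K}.$$ Then $\varepsilon_{\mathcal{K}}-\varepsilon_{\mathcal{K}\cup\{n\}}\ge 0$ if and only if $1/D\le\eta$.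
   Context: For a finite non-empty coalition $\mathcal{S}$ of participants, where participant $k$ has data size $D_k$, with $S=|\mathcal{S}|$, the generalization error of the federated model trained by $\mathcal{S}$ is defined as $\varepsilon_{\mathcal{S}}=\frac{d\gamma^2}{S^2}\sum_{k\in\mathcal{S}}\frac{1}{D_k}+\frac{S-1}{S}\sigma^2$. Here $d$ is the feature dimension, $\gamma^2$ the data (target-noise) variance and $\sigma^2$ the client variance. The quantity $\varepsilon_{\mathcal{K}}-\varepsilon_{\mathcal{K}\cup\{n\}}$ is called the network effect of client $n$'s participation. *)

theory Defs
  imports Complex_Main
begin

text \<open>Generalization error of the federated model trained by a finite coalition S,
  where participant k has data size Dsz k; d feature dimension, gamma2 = gamma^2 data variance,
  sigma2 = sigma^2 client variance.\<close>
definition gen_err :: "nat \<Rightarrow> real \<Rightarrow> real \<Rightarrow> ('a \<Rightarrow> real) \<Rightarrow> 'a set \<Rightarrow> real" where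
  "gen_err d gamma2 sigma2 Dsz S =
     real d * gamma2 / (real (card S))^2 * (\<Sum>k\<in>S. 1 / Dsz k)
     + (real (card S) - 1) / real (card S) * sigma2"

end

theory Submission
  imports Defs
begin

text \<open>Write K for the size of the coalition, A for the sum of the 1/D_k over its members and
  c = d gamma^2. Clearing denominators, the network effect of n factors as
  c/(K+1)^2 * (eta - 1/D), so its sign is that of eta - 1/D; grouping the members by type turns
  A into the sum of the K_i/D_i occurring in eta.\<close>

lemma sum_comp_eq_sum_card_fibres:
  fixes f :: "'b \<Rightarrow> 'c::semiring_1"
  assumes "finite S" "finite T" "t ` S \<subseteq> T"
  shows "(\<Sum>k\<in>S. f (t k)) = (\<Sum>i\<in>T. of_nat (card {k\<in>S. t k = i}) * f i)"
proof -
  have "(\<Sum>k\<in>S. f (t k)) = (\<Sum>i\<in>T. \<Sum>k\<in>{k\<in>S. t k = i}. f (t k))"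
    using assms by (rule sum.group [symmetric])
  also have "\<dots> = (\<Sum>i\<in>T. of_nat (card {k\<in>S. t k = i}) * f i)"
    by (intro sum.cong) simp_all
  finally show ?thesis .
qed

lemma gen_err_insert:
  assumes "finite S" "n \<notin> S"
  shows "gen_err d gamma2 sigma2 Dsz (insert n S) =
    real d * gamma2 / (real (card S) + 1)^2 * ((\<Sum>k\<in>S. 1 / Dsz k) + 1 / Dsz n)
    + real (card S) / (real (card S) + 1) * sigma2"
  using assms by (simp add: gen_err_def algebra_simps)

lemma network_effect_identity:
  fixes K c A x sigma2 :: real
  assumes "K > 0" "c \<noteq> 0"
  shows "c * A / K^2 + (K - 1) / K * sigma2 - (c / (K + 1)^2 * (A + x) + K / (K + 1) * sigma2) =
    c / (K + 1)^2 * ((2 * K + 1) * A / K^2 - (K + 1) * sigma2 / (c * K) - x)"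
proof -
  \<comment> \<open>Naming K + 1 stops the simplifier from expanding (K + 1)^2 into a polynomial it cannot
    recognise as nonzero.\<close>
  define L where "L = K + 1"
  have L: "L > 0" "K = L - 1" using assms(1) by (simp_all add: L_def)
  show ?thesis unfolding L_def [symmetric] using assms L
    by (simp add: divide_simps power2_eq_square) (simp add: algebra_simps)
qed

lemma gen_err_minus_gen_err_insert:
  fixes Dsz :: "'a \<Rightarrow> real" and S :: "'a set"
  assumes "finite S" "S \<noteq> {}" "n \<notin> S" "real d * gamma2 \<noteq> 0"
  defines "K \<equiv> real (card S)" and "A \<equiv> \<Sum>k\<in>S. 1 / Dsz k" and "c \<equiv> real d * gamma2"
  shows "gen_err d gamma2 sigma2 Dsz S - gen_err d gamma2 sigma2 Dsz (insert n S) =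
    c / (K + 1)^2 * ((2 * K + 1) * A / K^2 - (K + 1) * sigma2 / (c * K) - 1 / Dsz n)"
proof -
  have "K > 0" using assms(1,2) by (simp add: K_def card_gt_0_iff)
  have "c \<noteq> 0" using assms(4) by (simp add: c_def)
  from network_effect_identity[OF \<open>K > 0\<close> \<open>c \<noteq> 0\<close>] show ?thesis
    unfolding gen_err_insert[OF assms(1,3)] by (simp add: gen_err_def K_def A_def c_def)
qed

theorem theorem1:
  fixes d I :: nat and gamma2 sigma2 D :: real
    and Dt :: "nat \<Rightarrow> real" and ctype :: "'a \<Rightarrow> nat" and Dsz :: "'a \<Rightarrow> real"
    and Kc :: "'a set" and n :: 'a
  assumes "d \<ge> 1" and "gamma2 > 0" and "sigma2 \<ge> 0"
    and "\<forall>i\<in>{1..I}. Dt i > 0"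
    and "finite Kc" and "Kc \<noteq> {}"
    and "\<forall>k\<in>Kc. ctype k \<in> {1..I} \<and> Dsz k = Dt (ctype k)"
    and "n \<notin> Kc" and "D > 0" and "Dsz n = D"
  shows "(let K = real (card Kc);
              Ki = (\<lambda>i. real (card {k\<in>Kc. ctype k = i}));
              eta = (2 * K + 1) * (\<Sum>i=1..I. Ki i / Dt i) / K^2
                    - (K + 1) * sigma2 / (real d * gamma2 * K)
          in (gen_err d gamma2 sigma2 Dsz Kc - gen_err d gamma2 sigma2 Dsz (insert n Kc) \<ge> 0
              \<longleftrightarrow> 1 / D \<le> eta))"
proof -
  define K where "K = real (card Kc)"
  define c where "c = real d * gamma2"
  define eta where "eta = (2 * K + 1) * (\<Sum>i=1..I. real (card {k\<in>Kc. ctype k = i}) / Dt i) / K^2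
    - (K + 1) * sigma2 / (c * K)"
  have "(\<Sum>k\<in>Kc. 1 / Dsz k) = (\<Sum>k\<in>Kc. 1 / Dt (ctype k))"
    using assms(7) by simp
  also have "\<dots> = (\<Sum>i=1..I. real (card {k\<in>Kc. ctype k = i}) / Dt i)"
    using assms(5,7) by (subst sum_comp_eq_sum_card_fibres[of _ "{1..I}"]) auto
  finally have sum_by_type: "(\<Sum>k\<in>Kc. 1 / Dsz k) = (\<Sum>i=1..I. real (card {k\<in>Kc. ctype k = i}) / Dt i)" .
  have "c > 0" using assms(1,2) by (simp add: c_def)
  have diff: "gen_err d gamma2 sigma2 Dsz Kc - gen_err d gamma2 sigma2 Dsz (insert n Kc) =
      c / (K + 1)^2 * (eta - 1 / D)"
    unfolding eta_def sum_by_type [symmetric] K_def c_def assms(10) [symmetric]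
    using assms(1,2) by (intro gen_err_minus_gen_err_insert assms(5,6,8)) simp
  have "c / (K + 1)^2 > 0" using \<open>c > 0\<close> by (simp add: K_def add_pos_nonneg)
  then have "0 \<le> c / (K + 1)^2 * (eta - 1 / D) \<longleftrightarrow> 1 / D \<le> eta"
    by (simp only: zero_le_mult_iff diff_ge_0_iff_ge) linarith
  then show ?thesis
    unfolding Let_def diff by (simp add: eta_def K_def c_def)
qed

end
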